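(* Let $\alpha>0$ be irrational. (i) If $\alpha$ is badly approximable, then there is $C>0$ with $\delta_{\min}^{(\alpha)}(N)\ge C/N$ for all $N\ge2$. (ii) If $\alpha$ is strongly Diophantine, then for every $\varepsilon>0$ there is $C>0$ with $\delta_{\min}^{(\alpha)}(N)\ge C/N^{1+\varepsilon}$ for all $N\ge 2$. (iii) For Lebesgue-almost every $\alpha>0$: for every $\varepsilon>0$ there is $C>0$ with $\delta_{\min}^{(\alpha)}(N)\ge \frac{C}{N(\log N)^{1+\varepsilon}}$ for all $N\ge2$.
   Context: For irrational $\alpha>0$, the numbers $\alpha m^2+n^2$ with integers $m,n\ge 1$ are pairwise distinct; list them in increasing order as $0<\lambda_1<\lambda_2<\cdots$. For $N\ge 2$ define $\delta_{\min}^{(\alpha)}(N)=\min\{\lambda_{i+1}-\lambda_i : 1\le i<N\}$. An irrational $\alpha$ is badly approximable if there is $c>0$ such that $|q\alpha-p|\ge c/q$ for all integers $p,q$ with $q\ge1$. It is strongly Diophantine if for every $\varepsilon>0$ there is $c_\varepsilon>0$ such that $|q\alpha-p|\ge c_\varepsilon q^{-1-\varepsilon}$ for all integers $p,q$ with $q\ge1$. Constants $C$ may depend on $\alpha$ and $\varepsilon$. *)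

theory Defs
  imports "HOL-Analysis.Analysis"
begin

definition spec_set :: "real \<Rightarrow> real set" where
  "spec_set \<alpha> = {\<alpha> * (real m)^2 + (real n)^2 | m n :: nat. m \<ge> 1 \<and> n \<ge> 1}"

definition lam :: "real \<Rightarrow> nat \<Rightarrow> real" where
  "lam \<alpha> i = (THE x. x \<in> spec_set \<alpha> \<and> card {y \<in> spec_set \<alpha>. y < x} = i - 1)"

definition delta_min :: "real \<Rightarrow> nat \<Rightarrow> real" where
  "delta_min \<alpha> N = Min {lam \<alpha> (i + 1) - lam \<alpha> i | i. 1 \<le> i \<and> i < N}"

definition badly_approximable :: "real \<Rightarrow> bool" where
  "badly_approximable \<alpha> \<longleftrightarrow> \<alpha> \<notin> \<rat> \<and>
     (\<exists>c>0. \<forall>p q :: int. q \<ge> 1 \<longrightarrow> \<bar>real_of_int q * \<alpha> - real_of_int p\<bar> \<ge> c / real_of_int q)"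

definition strongly_diophantine :: "real \<Rightarrow> bool" where
  "strongly_diophantine \<alpha> \<longleftrightarrow> \<alpha> \<notin> \<rat> \<and>
     (\<forall>\<epsilon>>0. \<exists>c>0. \<forall>p q :: int. q \<ge> 1 \<longrightarrow>
        \<bar>real_of_int q * \<alpha> - real_of_int p\<bar> \<ge> c * (real_of_int q) powr (-1 - \<epsilon>))"

end

theory Submission
  imports Defs
begin

text \<open>Two points of the spectrum differ by |a alpha + b| with integers a = m'^2 - m^2 and
  b = n'^2 - n^2. If a = 0 the gap is at least 1; otherwise it equals |q alpha - p| for some
  1 <= q <= x'/alpha, so a decreasing Diophantine lower bound psi for alpha bounds it from below by
  psi(x'/alpha). The s^2 points with m, n <= s = ceiling(sqrt N) give lambda_N <= 4 (alpha + 1) N,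
  hence delta_min(N) >= min 1 (psi (4 (alpha + 1) N / alpha)), and the three parts follow by choosing
  psi. For part (iii), Borel-Cantelli with the convergent series sum 1/(q log(q+2)^(1+eps)) shows that
  almost every alpha satisfies |q alpha - p| >= 1/(q log(q+2)^(1+eps)) for all large q, and
  irrationality of alpha handles the finitely many remaining q.\<close>

section \<open>Ranks in a discrete subset of the reals\<close>

lemma obtain_least_element:
  fixes S :: "real set"
  assumes fin: "\<And>X. finite {y\<in>S. y \<le> X}" and "T \<subseteq> S" "T \<noteq> {}"
  obtains m where "m \<in> T" "\<And>y. y \<in> T \<Longrightarrow> m \<le> y"
proof -
  obtain x where x: "x \<in> T" using assms(3) by blast
  let ?L = "{y\<in>T. y \<le> x}"
  have "finite ?L" using fin[of x] by (rule rev_finite_subset) (use assms(2) in auto)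
  moreover have "x \<in> ?L" using x by simp
  ultimately have "Min ?L \<in> T" "Min ?L \<le> x" using Min_in Min_le by blast+
  moreover have "Min ?L \<le> y" if "y \<in> T" for y
  proof (cases "y \<le> x")
    case True
    then show ?thesis using \<open>finite ?L\<close> that by (intro Min_le) simp_all
  next
    case False
    then show ?thesis using \<open>Min ?L \<le> x\<close> by simp
  qed
  ultimately show thesis using that by blast
qed

lemma ex_rank:
  fixes S :: "real set"
  assumes fin: "\<And>X. finite {y\<in>S. y \<le> X}"
    and unbounded: "\<And>X. \<exists>y\<in>S. X < y" and "S \<noteq> {}"
  shows "\<exists>x\<in>S. card {y\<in>S. y < x} = k"
proof (induction k)
  case 0
  obtain m where m: "m \<in> S" "\<And>y. y \<in> S \<Longrightarrow> m \<le> y"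
    by (rule obtain_least_element[OF fin order.refl \<open>S \<noteq> {}\<close>]) blast
  then have "{y\<in>S. y < m} = {}" by (auto simp: not_less)
  then have "card {y\<in>S. y < m} = 0" by (simp only: card.empty)
  with m(1) show ?case by blast
next
  case (Suc k)
  then obtain x where x: "x \<in> S" "card {y\<in>S. y < x} = k" by blast
  have "{y\<in>S. x < y} \<noteq> {}" using unbounded[of x] by blast
  then obtain m where m: "m \<in> {y\<in>S. x < y}" "\<And>y. y \<in> {y\<in>S. x < y} \<Longrightarrow> m \<le> y"
    by (rule obtain_least_element[OF fin Collect_subset]) blast
  have "{y\<in>S. y < m} = insert x {y\<in>S. y < x}"
  proof (intro equalityI subsetI)
    fix y assume "y \<in> {y\<in>S. y < m}"
    then show "y \<in> insert x {y\<in>S. y < x}" using m(2)[of y] by (cases x y rule: linorder_cases) auto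
  qed (use m(1) x(1) in auto)
  moreover have "finite {y\<in>S. y < x}" using fin[of x] by (rule rev_finite_subset) auto
  ultimately have "card {y\<in>S. y < m} = Suc k" using x by simp
  then show ?case using m(1) by blast
qed

lemma card_less_mono:
  fixes S :: "real set"
  assumes fin: "\<And>X. finite {y\<in>S. y \<le> X}" and "x \<in> S" "x < x'"
  shows "card {y\<in>S. y < x} < card {y\<in>S. y < x'}"
proof (rule psubset_card_mono)
  show "finite {y\<in>S. y < x'}" using fin[of x'] by (rule rev_finite_subset) auto
  show "{y\<in>S. y < x} \<subset> {y\<in>S. y < x'}" using assms by auto
qed

lemma ex1_rank:
  fixes S :: "real set"
  assumes fin: "\<And>X. finite {y\<in>S. y \<le> X}"
    and "\<And>X. \<exists>y\<in>S. X < y" and "S \<noteq> {}"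
  shows "\<exists>!x. x \<in> S \<and> card {y\<in>S. y < x} = k"
proof (rule ex_ex1I)
  show "\<exists>x. x \<in> S \<and> card {y\<in>S. y < x} = k" using ex_rank[OF assms] by blast
  show "x = x'" if "x \<in> S \<and> card {y\<in>S. y < x} = k" "x' \<in> S \<and> card {y\<in>S. y < x'} = k" for x x'
    using card_less_mono[OF fin, of x x'] card_less_mono[OF fin, of x' x] that
    by (cases x x' rule: linorder_cases) auto
qed

section \<open>The enumeration of the spectrum\<close>

lemma finite_spec_set_le:
  assumes "\<alpha> > 0" shows "finite {y\<in>spec_set \<alpha>. y \<le> X}"
proof -
  define K where "K = nat \<lceil>X/\<alpha> + X\<rceil>"
  have "{y\<in>spec_set \<alpha>. y \<le> X} \<subseteq> (\<lambda>(m,n). \<alpha>*(real m)^2 + (real n)^2) ` ({..K}\<times>{..K})"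
  proof
    fix y assume "y \<in> {y\<in>spec_set \<alpha>. y \<le> X}"
    then obtain m n :: nat where y: "y = \<alpha>*(real m)^2 + (real n)^2" "m \<ge> 1" "n \<ge> 1" "y \<le> X"
      by (auto simp: spec_set_def)
    have "real m \<le> (real m)^2" "real n \<le> (real n)^2" using y(2,3) by (simp_all add: power2_eq_square)
    moreover have mX: "\<alpha>*(real m)^2 \<le> X" and nX: "(real n)^2 \<le> X"
      using y assms by (smt (verit) zero_le_power2 mult_nonneg_nonneg)+
    moreover from nX have "0 \<le> X" using zero_le_power2[of "real n"] by linarith
    moreover from mX this have "(real m)^2 \<le> X/\<alpha>" "0 \<le> X/\<alpha>"
      using assms by (simp_all add: pos_le_divide_eq mult.commute)
    moreover have "X/\<alpha> + X \<le> real K" unfolding K_def by (rule real_nat_ceiling_ge)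
    ultimately have "real m \<le> real K" "real n \<le> real K" by linarith+
    then show "y \<in> (\<lambda>(m,n). \<alpha>*(real m)^2 + (real n)^2) ` ({..K}\<times>{..K})"
      using y(1) by force
  qed
  then show ?thesis by (rule finite_subset) auto
qed

lemma spec_set_unbounded:
  assumes "\<alpha> > 0" shows "\<exists>y\<in>spec_set \<alpha>. X < y"
proof -
  define n where "n = nat \<lceil>X\<rceil> + 1"
  have "\<alpha> + (real n)^2 \<in> spec_set \<alpha>"
    unfolding spec_set_def by (intro CollectI exI[of _ 1] exI[of _ n]) (simp add: n_def)
  moreover have "X < real n" using real_nat_ceiling_ge[of X] by (simp add: n_def)
  moreover have "real n \<le> (real n)^2" by (rule self_le_power) (simp_all add: n_def)
  ultimately show ?thesis using assms by (smt (verit) bexI)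
qed

lemma spec_set_nonempty: "spec_set \<alpha> \<noteq> {}"
  unfolding spec_set_def by force

lemma
  assumes "\<alpha> > 0"
  shows lam_in_spec_set: "lam \<alpha> i \<in> spec_set \<alpha>"
    and card_less_lam: "card {y\<in>spec_set \<alpha>. y < lam \<alpha> i} = i - 1"
  using theI'[OF ex1_rank[OF finite_spec_set_le[OF assms] spec_set_unbounded[OF assms]
        spec_set_nonempty, of "i - 1"]]
  unfolding lam_def by blast+

lemma lam_less_Suc:
  assumes "\<alpha> > 0" "i \<ge> 1"
  shows "lam \<alpha> i < lam \<alpha> (Suc i)"
proof (rule ccontr)
  assume "\<not> ?thesis"
  then have "{y\<in>spec_set \<alpha>. y < lam \<alpha> (Suc i)} \<subseteq> {y\<in>spec_set \<alpha>. y < lam \<alpha> i}" by auto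
  moreover have "finite {y\<in>spec_set \<alpha>. y < lam \<alpha> i}"
    using finite_spec_set_le[OF assms(1), of "lam \<alpha> i"] by (rule rev_finite_subset) auto
  ultimately have "card {y\<in>spec_set \<alpha>. y < lam \<alpha> (Suc i)} \<le> card {y\<in>spec_set \<alpha>. y < lam \<alpha> i}"
    by (rule card_mono[rotated])
  then show False using card_less_lam[OF assms(1)] assms(2) by simp
qed

text \<open>Since \<open>i - 1\<close> truncates, \<open>lam \<alpha> 0 = lam \<alpha> 1\<close>.\<close>
lemma mono_lam:
  assumes "\<alpha> > 0" shows "mono (lam \<alpha>)"
proof (rule mono_iff_le_Suc[THEN iffD2], intro allI)
  fix i
  show "lam \<alpha> i \<le> lam \<alpha> (Suc i)"
    using lam_less_Suc[OF assms, of i] by (cases i) (simp_all add: lam_def)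
qed

lemma lam_le_if_card_le:
  assumes "\<alpha> > 0" "i \<ge> 1" "i \<le> card {y\<in>spec_set \<alpha>. y \<le> X}"
  shows "lam \<alpha> i \<le> X"
proof (rule ccontr)
  assume "\<not> ?thesis"
  then have "{y\<in>spec_set \<alpha>. y \<le> X} \<subseteq> {y\<in>spec_set \<alpha>. y < lam \<alpha> i}" by auto
  moreover have "finite {y\<in>spec_set \<alpha>. y < lam \<alpha> i}"
    using finite_spec_set_le[OF assms(1), of "lam \<alpha> i"] by (rule rev_finite_subset) auto
  ultimately have "card {y\<in>spec_set \<alpha>. y \<le> X} \<le> card {y\<in>spec_set \<alpha>. y < lam \<alpha> i}"
    by (rule card_mono[rotated])
  then show False using card_less_lam[OF assms(1)] assms by simp
qed

lemma spec_set_inj: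
  assumes "\<alpha> \<notin> \<rat>" "\<alpha> * (real m)^2 + (real n)^2 = \<alpha> * (real m')^2 + (real n')^2"
  shows "m = m' \<and> n = n'"
proof -
  have "(real m)^2 = (real m')^2"
  proof (rule ccontr)
    assume ne: "(real m)^2 \<noteq> (real m')^2"
    with assms(2) have "\<alpha> = ((real n')^2 - (real n)^2) / ((real m)^2 - (real m')^2)"
      by (simp add: field_simps)
    also have "\<dots> \<in> \<rat>" by (intro Rats_divide Rats_diff) (simp_all add: Rats_of_nat)
    finally show False using assms(1) by simp
  qed
  with assms(2) show ?thesis by simp
qed

lemma card_spec_set_le_linear:
  assumes "\<alpha> > 0" "\<alpha> \<notin> \<rat>" "N \<ge> 1"
  shows "N \<le> card {y\<in>spec_set \<alpha>. y \<le> 4 * (\<alpha> + 1) * real N}"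
proof -
  define s where "s = nat \<lceil>sqrt (real N)\<rceil>"
  have sqrt_ge: "sqrt (real N) \<ge> 1" using assms(3) by simp
  have "sqrt (real N) \<le> real s" unfolding s_def by (rule real_nat_ceiling_ge)
  from power_mono[OF this, of 2] have N_le: "N \<le> s * s"
    by (simp add: power2_eq_square flip: of_nat_mult)
  have "real s \<le> 2 * sqrt (real N)" unfolding s_def using sqrt_ge by linarith
  from power_mono[OF this, of 2] have s_le: "(real s)^2 \<le> 4 * real N"
    by (simp add: power_mult_distrib)
  define g where "g = (\<lambda>(m, n). \<alpha> * (real m)^2 + (real n)^2)"
  have "inj_on g ({1..s} \<times> {1..s})"
    unfolding inj_on_def g_def using spec_set_inj[OF assms(2)] by auto
  then have "card (g ` ({1..s} \<times> {1..s})) = s * s" by (simp add: card_image)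
  moreover have "g ` ({1..s} \<times> {1..s}) \<subseteq> {y\<in>spec_set \<alpha>. y \<le> 4 * (\<alpha> + 1) * real N}"
  proof safe
    fix m n assume mn: "m \<in> {1..s}" "n \<in> {1..s}"
    then show "g (m, n) \<in> spec_set \<alpha>" unfolding spec_set_def g_def by auto
    have "(real m)^2 \<le> (real s)^2" "(real n)^2 \<le> (real s)^2"
      using mn by (auto intro!: power_mono)
    with s_le have "(real m)^2 \<le> 4 * real N" "(real n)^2 \<le> 4 * real N" by linarith+
    then have "\<alpha> * (real m)^2 \<le> \<alpha> * (4 * real N)" using assms(1) by simp
    then show "g (m, n) \<le> 4 * (\<alpha> + 1) * real N"
      unfolding g_def using \<open>(real n)^2 \<le> 4 * real N\<close> by (simp add: algebra_simps)
  qed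
  then have "card (g ` ({1..s} \<times> {1..s})) \<le> card {y\<in>spec_set \<alpha>. y \<le> 4 * (\<alpha> + 1) * real N}"
    using finite_spec_set_le[OF assms(1)] by (rule card_mono[rotated])
  ultimately show ?thesis using N_le by linarith
qed

lemma lam_le_linear:
  assumes "\<alpha> > 0" "\<alpha> \<notin> \<rat>" "N \<ge> 1"
  shows "lam \<alpha> N \<le> 4 * (\<alpha> + 1) * real N"
  using lam_le_if_card_le[OF assms(1,3) card_spec_set_le_linear[OF assms]] .

section \<open>Gaps in the spectrum\<close>

lemma spec_set_gap_ge:
  fixes \<psi> :: "real \<Rightarrow> real"
  assumes "\<alpha> > 0" "x \<in> spec_set \<alpha>" "x' \<in> spec_set \<alpha>" "x < x'" "x' \<le> B"
    and dioph: "\<And>p q::int. q \<ge> 1 \<Longrightarrow> \<psi> (of_int q) \<le> \<bar>of_int q * \<alpha> - of_int p\<bar>"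
    and antimono: "\<And>q y. 1 \<le> q \<Longrightarrow> q \<le> y \<Longrightarrow> \<psi> y \<le> \<psi> q"
  shows "min 1 (\<psi> (B / \<alpha>)) \<le> x' - x"
proof -
  obtain m n m' n' :: nat where x: "x = \<alpha> * (real m)^2 + (real n)^2"
    and x': "x' = \<alpha> * (real m')^2 + (real n')^2"
    using assms(2,3) unfolding spec_set_def by auto
  define a where "a = int m'^2 - int m^2"
  define b where "b = int n'^2 - int n^2"
  have diff: "x' - x = of_int a * \<alpha> + of_int b"
    unfolding a_def b_def x x' by (simp add: algebra_simps)
  then have gap: "x' - x = \<bar>of_int a * \<alpha> + of_int b\<bar>" using assms(4) by simp
  show ?thesis
  proof (cases "a = 0")
    case True
    then have "b \<ge> 1" using diff assms(4) by simp
    then show ?thesis using diff True by simp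
  next
    case False
    have mB: "\<alpha> * (real m)^2 \<le> B" "\<alpha> * (real m')^2 \<le> B"
      using assms(4,5) zero_le_power2[of "real n"] zero_le_power2[of "real n'"] unfolding x x' by linarith+
    have "of_int \<bar>a\<bar> \<le> max ((real m)^2) ((real m')^2)"
      unfolding a_def using zero_le_power2[of "real m"] zero_le_power2[of "real m'"]
      by (simp only: of_int_abs of_int_diff of_int_power of_int_of_nat_eq)
    then have "\<alpha> * of_int \<bar>a\<bar> \<le> \<alpha> * max ((real m)^2) ((real m')^2)"
      using assms(1) by (simp add: mult_left_mono)
    also have "\<dots> \<le> B" using mB by (simp add: max_def)
    finally have "of_int \<bar>a\<bar> \<le> B / \<alpha>" using assms(1) by (simp add: pos_le_divide_eq mult.commute)
    obtain p where p: "x' - x = \<bar>of_int \<bar>a\<bar> * \<alpha> - of_int p\<bar>"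
    proof (cases "a > 0")
      case True
      then show thesis using gap by (intro that[of "-b"]) simp
    next
      case False
      then show thesis using gap by (intro that[of b]) (simp add: abs_minus_commute algebra_simps)
    qed
    have "1 \<le> \<bar>a\<bar>" using \<open>a \<noteq> 0\<close> by linarith
    then have "\<psi> (B / \<alpha>) \<le> \<psi> (of_int \<bar>a\<bar>)"
      using antimono \<open>of_int \<bar>a\<bar> \<le> B / \<alpha>\<close> by (simp only: of_int_1_le_iff)
    also have "\<dots> \<le> x' - x" unfolding p by (rule dioph) fact
    finally show ?thesis by simp
  qed
qed

lemma delta_min_ge:
  fixes \<psi> :: "real \<Rightarrow> real"
  assumes "\<alpha> > 0" "\<alpha> \<notin> \<rat>" "N \<ge> 2"
    and dioph: "\<And>p q::int. q \<ge> 1 \<Longrightarrow> \<psi> (of_int q) \<le> \<bar>of_int q * \<alpha> - of_int p\<bar>"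
    and antimono: "\<And>q y. 1 \<le> q \<Longrightarrow> q \<le> y \<Longrightarrow> \<psi> y \<le> \<psi> q"
  shows "min 1 (\<psi> (4 * (\<alpha> + 1) / \<alpha> * real N)) \<le> delta_min \<alpha> N"
proof -
  let ?D = "{lam \<alpha> (i + 1) - lam \<alpha> i | i. 1 \<le> i \<and> i < N}"
  have "?D = (\<lambda>i. lam \<alpha> (i + 1) - lam \<alpha> i) ` {1..<N}" by auto
  then have "finite ?D" by simp
  moreover have "?D \<noteq> {}" using assms(3) by auto
  moreover have "min 1 (\<psi> (4 * (\<alpha> + 1) / \<alpha> * real N)) \<le> d" if "d \<in> ?D" for d
  proof -
    obtain i where i: "d = lam \<alpha> (Suc i) - lam \<alpha> i" "1 \<le> i" "i < N" using \<open>d \<in> ?D\<close> by auto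
    have "lam \<alpha> (Suc i) \<le> lam \<alpha> N" using monoD[OF mono_lam[OF assms(1)]] i(3) by simp
    also have "\<dots> \<le> 4 * (\<alpha> + 1) * real N" using lam_le_linear[OF assms(1,2)] assms(3) by simp
    finally have "min 1 (\<psi> (4 * (\<alpha> + 1) * real N / \<alpha>)) \<le> d"
      unfolding i(1) using lam_in_spec_set lam_less_Suc i(2) assms(1)
      by (intro spec_set_gap_ge[OF assms(1) _ _ _ _ dioph antimono]) auto
    then show ?thesis by simp
  qed
  ultimately show ?thesis unfolding delta_min_def by (simp add: Min_ge_iff)
qed

lemma delta_min_ge_rate:
  fixes \<psi> :: "real \<Rightarrow> real" and D :: "nat \<Rightarrow> real"
  assumes "\<alpha> > 0" "\<alpha> \<notin> \<rat>"
    and dioph: "\<And>p q::int. q \<ge> 1 \<Longrightarrow> \<psi> (of_int q) \<le> \<bar>of_int q * \<alpha> - of_int p\<bar>"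
    and antimono: "\<And>q y. 1 \<le> q \<Longrightarrow> q \<le> y \<Longrightarrow> \<psi> y \<le> \<psi> q"
    and "c > 0" "D\<^sub>0 > 0"
    and D_ge: "\<And>N. N \<ge> 2 \<Longrightarrow> D\<^sub>0 \<le> D N"
    and rate: "\<And>N. N \<ge> 2 \<Longrightarrow> c / D N \<le> \<psi> (4 * (\<alpha> + 1) / \<alpha> * real N)"
  shows "\<exists>C>0. \<forall>N\<ge>2. C / D N \<le> delta_min \<alpha> N"
proof (intro exI[of _ "min D\<^sub>0 c"] conjI allI impI)
  show "min D\<^sub>0 c > 0" using assms(5,6) by simp
  fix N :: nat assume N: "N \<ge> 2"
  have "D N > 0" using D_ge[OF N] assms(6) by linarith
  then have "min D\<^sub>0 c / D N \<le> min 1 (c / D N)"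
    using D_ge[OF N] by (simp add: divide_le_eq divide_right_mono)
  also have "\<dots> \<le> min 1 (\<psi> (4 * (\<alpha> + 1) / \<alpha> * real N))" using rate[OF N] by simp
  also have "\<dots> \<le> delta_min \<alpha> N" using delta_min_ge[OF assms(1,2) N dioph antimono] .
  finally show "min D\<^sub>0 c / D N \<le> delta_min \<alpha> N" .
qed

section \<open>Diophantine bounds for almost every \<open>\<alpha>\<close>\<close>

lemma of_nat_mult_irrational_notin_Ints:
  assumes "\<alpha> \<notin> \<rat>" "q \<ge> 1"
  shows "real q * \<alpha> \<notin> \<int>"
proof
  assume "real q * \<alpha> \<in> \<int>"
  then obtain m where "real q * \<alpha> = of_int m" by (auto elim: Ints_cases)
  then have "\<alpha> = of_int m / real q" using assms(2) by (simp add: field_simps)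
  also have "\<dots> \<in> \<rat>" by (intro Rats_divide) simp_all
  finally show False using assms(1) by simp
qed

lemma diophantine_bound_of_eventually:
  fixes \<psi> :: "nat \<Rightarrow> real"
  assumes "\<alpha> \<notin> \<rat>" "\<And>q. 0 \<le> \<psi> q" "\<And>q. \<psi> q \<le> 1"
    and "eventually (\<lambda>q. \<forall>p::int. \<psi> q \<le> \<bar>real q * \<alpha> - of_int p\<bar>) sequentially"
  shows "\<exists>c>0. \<forall>q\<ge>1. \<forall>p::int. c * \<psi> q \<le> \<bar>real q * \<alpha> - of_int p\<bar>"
proof -
  obtain Q where Q: "\<And>q p. q \<ge> Q \<Longrightarrow> \<psi> q \<le> \<bar>real q * \<alpha> - of_int p\<bar>"
    using assms(4) unfolding eventually_sequentially by blast
  define c where "c = Min (insert 1 ((\<lambda>q. infdist (real q * \<alpha>) \<int>) ` {1..Q}))"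
  have "(\<int> :: real set) \<noteq> {}" using Ints_0 by blast
  then have "c > 0" unfolding c_def
    using infdist_pos_not_in_closed[OF closed_Ints _ of_nat_mult_irrational_notin_Ints[OF assms(1)]]
    by (auto simp: Min_gr_iff)
  moreover have "c * \<psi> q \<le> \<bar>real q * \<alpha> - of_int p\<bar>" if "q \<ge> 1" for q p
  proof (cases "q \<ge> Q")
    case True
    have "c \<le> 1" unfolding c_def by simp
    then have "c * \<psi> q \<le> \<psi> q"
      using mult_left_le_one_le[of "\<psi> q" c] \<open>c > 0\<close> assms(2) by simp
    then show ?thesis using Q[OF True, of p] by linarith
  next
    case False
    have "c * \<psi> q \<le> c" using \<open>c > 0\<close> assms(3) by (simp add: mult_left_le)
    also have "\<dots> \<le> infdist (real q * \<alpha>) \<int>"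
      unfolding c_def using False that by (intro Min_le) auto
    also have "\<dots> \<le> \<bar>real q * \<alpha> - of_int p\<bar>"
      using infdist_le[OF Ints_of_int, of "real q * \<alpha>" p] by (simp add: dist_real_def)
    finally show ?thesis .
  qed
  ultimately show ?thesis by blast
qed

lemma greaterThanLessThan_divide_iff:
  fixes p r x :: real
  assumes "q > 0"
  shows "x \<in> {(p - r) / q <..< (p + r) / q} \<longleftrightarrow> \<bar>q * x - p\<bar> < r"
  using assms by (auto simp: field_simps abs_less_iff)

lemma measure_near_multiples_le:
  fixes M q :: nat and r :: real
  assumes "q \<ge> 1" "0 \<le> r" "r \<le> 1"
  shows "measure lborel ({-real M..real M} \<inter> (\<Union>p::int. {(of_int p - r) / q <..< (of_int p + r) / q}))
           \<le> 2 * (2 * real M + 3) * r"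
proof -
  define B where "B = int q * int M + 1"
  let ?I = "\<lambda>p::int. {(of_int p - r) / q <..< (of_int p + r) / q}"
  have q0: "real q > 0" using assms(1) by simp
  have I_le: "(of_int p - r) / q \<le> (of_int p + r) / q" for p :: int
    using assms(2) q0 by (intro divide_right_mono) auto
  have "{-real M..real M} \<inter> (\<Union>p. ?I p) \<subseteq> (\<Union>p\<in>{-B..B}. ?I p)"
  proof safe
    fix x p assume x: "x \<in> {-real M..real M}" "x \<in> ?I p"
    then have "\<bar>real q * x - of_int p\<bar> < r" using greaterThanLessThan_divide_iff[OF q0] by blast
    moreover have "\<bar>real q * x\<bar> \<le> real q * real M" using x(1) q0 by (simp add: abs_mult abs_le_iff)
    ultimately have "real_of_int \<bar>p\<bar> < real_of_int B" using assms(3) unfolding B_def by simp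
    then have "p \<in> {-B..B}" by (simp only: of_int_less_iff) auto
    then show "x \<in> (\<Union>p\<in>{-B..B}. ?I p)" using x(2) by blast
  qed
  then have "measure lborel ({-real M..real M} \<inter> (\<Union>p. ?I p)) \<le> measure lborel (\<Union>p\<in>{-B..B}. ?I p)"
    using I_le by (intro measure_mono_fmeasurable fmeasurable.finite_UN) (auto intro!: fmeasurableI)
  also have "\<dots> \<le> (\<Sum>p\<in>{-B..B}. measure lborel (?I p))"
    by (intro measure_UNION_le) auto
  also have "\<dots> = real (card {-B..B}) * (2 * r / q)"
    using I_le q0 by (simp add: field_simps)
  also have "real (card {-B..B}) = 2 * real q * real M + 3" unfolding B_def by simp
  also have "(2 * real q * real M + 3) * (2 * r / q) = (2 * real M + 3 / q) * (2 * r)"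
    using q0 by (simp add: field_simps)
  also have "\<dots> \<le> (2 * real M + 3) * (2 * r)"
    using assms(1,2) by (intro mult_right_mono) (auto simp: divide_le_eq)
  finally show ?thesis by (simp add: algebra_simps)
qed

text \<open>The convergence half of Khintchine's theorem, via Borel--Cantelli on each \<open>[-M, M]\<close>.\<close>
lemma AE_eventually_diophantine:
  fixes \<psi> :: "nat \<Rightarrow> real"
  assumes "summable \<psi>" "\<And>q. 0 \<le> \<psi> q" "\<And>q. \<psi> q \<le> 1"
  shows "AE \<alpha> in lborel. eventually (\<lambda>q. \<forall>p::int. \<psi> q \<le> \<bar>real q * \<alpha> - of_int p\<bar>) sequentially"
proof -
  define A where "A M n = {-real M..real M} \<inter>
    (\<Union>p::int. {(of_int p - \<psi> (Suc n)) / Suc n <..< (of_int p + \<psi> (Suc n)) / Suc n})" for M n :: nat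
  have "AE \<alpha> in lborel. eventually (\<lambda>n. \<alpha> \<in> space lborel - A M n) sequentially" for M
  proof (rule borel_cantelli_AE1)
    show "A M n \<in> sets lborel" for n unfolding A_def by auto
    show "emeasure lborel (A M n) < \<infinity>" for n
      using emeasure_mono[of "A M n" "{-real M..real M}" lborel] unfolding A_def
      by (auto simp: less_top[symmetric] top_unique)
    have "summable (\<lambda>n. 2 * (2 * real M + 3) * \<psi> (Suc n))"
      using assms(1) by (intro summable_mult) (simp add: summable_Suc_iff)
    then show "summable (\<lambda>n. measure lborel (A M n))"
    proof (rule summable_comparison_test')
      fix n
      show "norm (measure lborel (A M n)) \<le> 2 * (2 * real M + 3) * \<psi> (Suc n)"
        unfolding A_def using measure_near_multiples_le[of "Suc n" "\<psi> (Suc n)" M] assms(2,3) by simp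
    qed
  qed
  then have "AE \<alpha> in lborel. \<forall>M. eventually (\<lambda>n. \<alpha> \<notin> A M n) sequentially"
    by (simp add: AE_all_countable)
  then show ?thesis
  proof (rule AE_mp, intro AE_I2 impI)
    fix \<alpha> :: real assume "\<forall>M. eventually (\<lambda>n. \<alpha> \<notin> A M n) sequentially"
    moreover obtain M :: nat where "\<bar>\<alpha>\<bar> \<le> real M" using real_arch_simple by blast
    ultimately have ev: "eventually (\<lambda>n. \<alpha> \<notin> A M n) sequentially" 
      and mem: "\<alpha> \<in> {-real M..real M}" by (auto simp: abs_le_iff)
    from ev have "eventually (\<lambda>n. \<forall>p::int. \<psi> (Suc n) \<le> \<bar>real (Suc n) * \<alpha> - of_int p\<bar>) sequentially"
      unfolding A_def by eventually_elim (use mem greaterThanLessThan_divide_iff in \<open>force simp: not_less\<close>)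
    then show "eventually (\<lambda>q. \<forall>p::int. \<psi> q \<le> \<bar>real q * \<alpha> - of_int p\<bar>) sequentially"
      using eventually_sequentially_Suc[of "\<lambda>q. \<forall>p::int. \<psi> q \<le> \<bar>real q * \<alpha> - of_int p\<bar>"] by simp
  qed
qed

lemma ln_add_two_ge_one:
  fixes x :: real
  assumes "x \<ge> 1"
  shows "1 \<le> ln (x + 2)"
proof -
  have "exp 1 \<le> x + 2" using exp_le assms by linarith
  then show ?thesis using assms by (subst ln_ge_iff) auto
qed

lemma summable_inverse_mult_ln_powr:
  fixes e :: real
  assumes "e > 1"
  shows "summable (\<lambda>n. 1 / (real n * ln (real n + 2) powr e))"
proof -
  define f where "f n = 1 / (real n * ln (real n + 2) powr e)" for n :: nat
  have f_nonneg: "0 \<le> f n" for n unfolding f_def by simp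
  have f_antimono: "f (Suc m) \<le> f m" if "0 < m" for m
  proof -
    have "ln (real m + 2) powr e \<le> ln (real (Suc m) + 2) powr e"
      using assms by (intro powr_mono2) auto
    then have "real m * ln (real m + 2) powr e \<le> real (Suc m) * ln (real (Suc m) + 2) powr e"
      by (intro mult_mono) auto
    then show ?thesis unfolding f_def using that by (intro divide_left_mono) auto
  qed
  have "summable (\<lambda>n. 2^n * f (2^n))"
  proof (rule summable_comparison_test_ev)
    show "summable (\<lambda>n. inverse (ln 2 powr e) * real n powr (-e))"
      using assms by (intro summable_mult) (simp add: summable_real_powr_iff)
    show "\<forall>\<^sub>F n in sequentially. norm (2^n * f (2^n)) \<le> inverse (ln 2 powr e) * real n powr (-e)"
    proof (rule eventually_mono[OF eventually_gt_at_top[of "0::nat"]])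
      fix n :: nat assume n: "0 < n"
      have "real n * ln 2 = ln (2^n)" by (simp add: ln_realpow)
      also have "\<dots> \<le> ln (2^n + 2)" by (rule ln_mono) auto
      finally have "(real n * ln 2) powr e \<le> ln (2^n + 2) powr e"
        using n assms by (intro powr_mono2) auto
      then have le: "real n powr e * ln 2 powr e \<le> ln (2^n + 2) powr e" by (simp add: powr_mult)
      have pos: "0 < real n powr e * ln 2 powr e" using n by simp
      then have "1 / ln (2^n + 2) powr e \<le> 1 / (real n powr e * ln 2 powr e)"
        using le by (intro divide_left_mono mult_pos_pos[OF order.strict_trans2[OF pos le] pos]) simp_all
      also have "\<dots> = inverse (ln 2 powr e) * real n powr (-e)" by (simp add: powr_minus field_simps)
      finally show "norm (2^n * f (2^n)) \<le> inverse (ln 2 powr e) * real n powr (-e)"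
        using f_nonneg by (simp add: f_def)
    qed
  qed
  then show ?thesis using condensation_test[of f] f_antimono f_nonneg unfolding f_def by blast
qed

lemma AE_diophantine_log:
  "AE \<alpha> in lborel. \<alpha> \<notin> \<rat> \<longrightarrow> (\<forall>\<epsilon>>0. \<exists>c>0. \<forall>p q::int. q \<ge> 1 \<longrightarrow>
     c / (real_of_int q * ln (real_of_int q + 2) powr (1 + \<epsilon>)) \<le> \<bar>real_of_int q * \<alpha> - of_int p\<bar>)"
proof -
  define \<psi> where "\<psi> k q = 1 / (real q * ln (real q + 2) powr (1 + 1 / Suc k))" for k q :: nat
  have \<psi>_nonneg: "0 \<le> \<psi> k q" for k q unfolding \<psi>_def by simp
  have \<psi>_le_one: "\<psi> k q \<le> 1" for k q
  proof (cases "q = 0")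
    case False
    then have "1 \<le> ln (real q + 2) powr (1 + 1 / Suc k)"
      using ln_add_two_ge_one[of "real q"] by (intro ge_one_powr_ge_zero) auto
    then have "1 \<le> real q * ln (real q + 2) powr (1 + 1 / Suc k)"
      using False by (intro mult_ge1_I) auto
    then show ?thesis unfolding \<psi>_def by simp
  qed (simp add: \<psi>_def)
  have "summable (\<psi> k)" for k
    unfolding \<psi>_def by (rule summable_inverse_mult_ln_powr) simp
  then have "AE \<alpha> in lborel. \<forall>k. eventually (\<lambda>q. \<forall>p::int. \<psi> k q \<le> \<bar>real q * \<alpha> - of_int p\<bar>) sequentially"
    using AE_eventually_diophantine \<psi>_nonneg \<psi>_le_one by (simp add: AE_all_countable)
  then show ?thesis
  proof (rule eventually_mono, intro impI allI)
    fix \<alpha> \<epsilon> :: real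
    assume ev: "\<forall>k. eventually (\<lambda>q. \<forall>p::int. \<psi> k q \<le> \<bar>real q * \<alpha> - of_int p\<bar>) sequentially"
      and "\<alpha> \<notin> \<rat>" and "\<epsilon> > 0"
    obtain m :: nat where "0 < m" "inverse (real m) < \<epsilon>"
      using ex_inverse_of_nat_less[OF \<open>\<epsilon> > 0\<close>] by blast
    then obtain k :: nat where k: "1 / Suc k \<le> \<epsilon>"
      by (intro that[of "m - 1"]) (simp add: inverse_eq_divide)
    obtain c where "c > 0" and c: "\<And>q p. q \<ge> 1 \<Longrightarrow> c * \<psi> k q \<le> \<bar>real q * \<alpha> - of_int p\<bar>"
      using diophantine_bound_of_eventually[OF \<open>\<alpha> \<notin> \<rat>\<close> \<psi>_nonneg \<psi>_le_one ev[rule_format, of k]]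
      by blast
    have "c / (real_of_int q * ln (real_of_int q + 2) powr (1 + \<epsilon>)) \<le> \<bar>real_of_int q * \<alpha> - of_int p\<bar>"
      if "q \<ge> 1" for p q :: int
    proof -
      define Q where "Q = nat q"
      have Q: "real Q = of_int q" "Q \<ge> 1" using that by (simp_all add: Q_def)
      have "ln (real Q + 2) powr (1 + 1 / Suc k) \<le> ln (real Q + 2) powr (1 + \<epsilon>)"
        using ln_add_two_ge_one[of "real Q"] Q(2) k by (intro powr_mono) auto
      then have "real Q * ln (real Q + 2) powr (1 + 1 / Suc k) \<le> real Q * ln (real Q + 2) powr (1 + \<epsilon>)"
        by (rule mult_left_mono) simp
      moreover have "0 < real Q * ln (real Q + 2) powr (1 + 1 / Suc k)" using Q(2) by simp
      ultimately have "c / (real Q * ln (real Q + 2) powr (1 + \<epsilon>)) \<le> c * \<psi> k Q"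
        unfolding \<psi>_def using \<open>c > 0\<close> by (simp add: divide_left_mono)
      also have "\<dots> \<le> \<bar>real Q * \<alpha> - of_int p\<bar>" using c Q(2) by blast
      finally show ?thesis unfolding Q(1) .
    qed
    then show "\<exists>c>0. \<forall>p q::int. q \<ge> 1 \<longrightarrow>
        c / (real_of_int q * ln (real_of_int q + 2) powr (1 + \<epsilon>)) \<le> \<bar>real_of_int q * \<alpha> - of_int p\<bar>"
      using \<open>c > 0\<close> by blast
  qed
qed

section \<open>The three gap bounds\<close>

lemma delta_min_badly_approximable:
  assumes "\<alpha> > 0" "badly_approximable \<alpha>"
  shows "\<exists>C>0. \<forall>N\<ge>2. C / real N \<le> delta_min \<alpha> N"
proof -
  obtain c where "\<alpha> \<notin> \<rat>" "c > 0"
    and c: "\<And>p q::int. q \<ge> 1 \<Longrightarrow> c / of_int q \<le> \<bar>of_int q * \<alpha> - of_int p\<bar>"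
    using assms(2) unfolding badly_approximable_def by blast
  show ?thesis
  proof (rule delta_min_ge_rate[where \<psi> = "\<lambda>q. c / q" and D = real and D\<^sub>0 = 1
        and c = "c * \<alpha> / (4 * (\<alpha> + 1))"])
    show "c / y \<le> c / q" if "1 \<le> q" "q \<le> y" for q y :: real
      using that \<open>c > 0\<close> by (intro divide_left_mono) auto
    show "c * \<alpha> / (4 * (\<alpha> + 1)) / real N \<le> c / (4 * (\<alpha> + 1) / \<alpha> * real N)" for N
      using assms(1) by (simp add: field_simps)
  qed (use assms(1) \<open>\<alpha> \<notin> \<rat>\<close> \<open>c > 0\<close> c in auto)
qed

lemma delta_min_strongly_diophantine:
  assumes "\<alpha> > 0" "strongly_diophantine \<alpha>" "\<epsilon> > 0"
  shows "\<exists>C>0. \<forall>N\<ge>2. C / real N powr (1 + \<epsilon>) \<le> delta_min \<alpha> N"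
proof -
  obtain c where "\<alpha> \<notin> \<rat>" "c > 0"
    and c: "\<And>p q::int. q \<ge> 1 \<Longrightarrow> c * of_int q powr (-1 - \<epsilon>) \<le> \<bar>of_int q * \<alpha> - of_int p\<bar>"
    using assms(2,3) unfolding strongly_diophantine_def by blast
  define K where "K = 4 * (\<alpha> + 1) / \<alpha>"
  have "K > 0" using assms(1) by (simp add: K_def)
  show ?thesis
  proof (rule delta_min_ge_rate[where \<psi> = "\<lambda>q. c * q powr (-1 - \<epsilon>)" and D\<^sub>0 = 1
        and D = "\<lambda>N. real N powr (1 + \<epsilon>)" and c = "c * K powr (-1 - \<epsilon>)"])
    show "c * y powr (-1 - \<epsilon>) \<le> c * q powr (-1 - \<epsilon>)" if "1 \<le> q" "q \<le> y" for q y :: real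
      using that \<open>c > 0\<close> assms(3) by (intro mult_left_mono powr_mono2') auto
    show "c * K powr (-1 - \<epsilon>) / real N powr (1 + \<epsilon>) \<le> c * (4 * (\<alpha> + 1) / \<alpha> * real N) powr (-1 - \<epsilon>)"
      if "N \<ge> 2" for N
      using \<open>K > 0\<close> that unfolding K_def[symmetric]
      by (simp add: powr_mult powr_minus[of "real N" "1 + \<epsilon>", symmetric] divide_inverse)
  qed (use assms \<open>\<alpha> \<notin> \<rat>\<close> \<open>c > 0\<close> \<open>K > 0\<close> c in \<open>auto intro: ge_one_powr_ge_zero\<close>)
qed

lemma ln_mult_add_two_le:
  fixes K x :: real
  assumes "K > 0" "x \<ge> 2"
  shows "ln (K * x + 2) \<le> (ln (K + 2) / ln 2 + 1) * ln x"
proof -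
  have "K * x + 2 \<le> (K + 2) * x" using assms by (simp add: algebra_simps)
  moreover have "0 < K * x + 2" using assms by (simp add: add_pos_pos)
  ultimately have "ln (K * x + 2) \<le> ln ((K + 2) * x)" by (rule ln_mono)
  also have "\<dots> = ln (K + 2) / ln 2 * ln 2 + ln x" using assms by (simp add: ln_mult)
  also have "\<dots> \<le> ln (K + 2) / ln 2 * ln x + ln x"
    using assms by (intro add_right_mono mult_left_mono) auto
  finally show ?thesis by (simp add: algebra_simps)
qed

lemma delta_min_log_diophantine:
  assumes "\<alpha> > 0" "\<alpha> \<notin> \<rat>" "\<epsilon> > 0" "c > 0"
    and c: "\<And>p q::int. q \<ge> 1 \<Longrightarrow>
      c / (of_int q * ln (of_int q + 2) powr (1 + \<epsilon>)) \<le> \<bar>of_int q * \<alpha> - of_int p\<bar>"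
  shows "\<exists>C>0. \<forall>N\<ge>2. C / (real N * ln (real N) powr (1 + \<epsilon>)) \<le> delta_min \<alpha> N"
proof -
  define K where "K = 4 * (\<alpha> + 1) / \<alpha>"
  define L where "L = ln (K + 2) / ln 2 + 1"
  have "K > 1" "L \<ge> 1" using assms(1) by (simp_all add: K_def L_def field_simps)
  then have "K > 0" by simp
  define h where "h q = q * ln (q + 2) powr (1 + \<epsilon>)" for q :: real
  have h_pos: "0 < h q" if "q \<ge> 1" for q
    unfolding h_def using that by simp
  have h_mono: "h q \<le> h y" if "1 \<le> q" "q \<le> y" for q y
    unfolding h_def using that assms(3) by (intro mult_mono powr_mono2) auto
  show ?thesis
  proof (rule delta_min_ge_rate[where \<psi> = "\<lambda>q. c / h q" and D\<^sub>0 = "ln 2 powr (1 + \<epsilon>)"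
        and D = "\<lambda>N. real N * ln (real N) powr (1 + \<epsilon>)" and c = "c / (K * L powr (1 + \<epsilon>))"])
    show "c / h y \<le> c / h q" if "1 \<le> q" "q \<le> y" for q y
      using that h_pos h_mono \<open>c > 0\<close> by (simp add: divide_left_mono)
    fix N :: nat assume N: "N \<ge> 2"
    then have "ln 2 powr (1 + \<epsilon>) \<le> ln (real N) powr (1 + \<epsilon>)"
      using assms(3) by (intro powr_mono2) auto
    also have "\<dots> \<le> real N * ln (real N) powr (1 + \<epsilon>)" using N by simp
    finally show "ln 2 powr (1 + \<epsilon>) \<le> real N * ln (real N) powr (1 + \<epsilon>)" .
    have "ln (K * real N + 2) powr (1 + \<epsilon>) \<le> (L * ln (real N)) powr (1 + \<epsilon>)"
      using ln_mult_add_two_le[OF \<open>K > 0\<close>, of "real N"] N \<open>K > 0\<close> assms(3) unfolding L_def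
      by (intro powr_mono2) auto
    also have "\<dots> = L powr (1 + \<epsilon>) * ln (real N) powr (1 + \<epsilon>)"
      using \<open>L \<ge> 1\<close> N by (simp add: powr_mult)
    finally have "h (K * real N) \<le> (K * L powr (1 + \<epsilon>)) * (real N * ln (real N) powr (1 + \<epsilon>))"
      unfolding h_def using \<open>K > 0\<close> by (simp add: mult_left_mono mult.assoc mult.left_commute)
    moreover have "1 \<le> K * real N" using \<open>K > 1\<close> N by (intro mult_ge1_I) auto
    ultimately show "c / (K * L powr (1 + \<epsilon>)) / (real N * ln (real N) powr (1 + \<epsilon>))
        \<le> c / h (4 * (\<alpha> + 1) / \<alpha> * real N)"
      using h_pos[of "K * real N"] \<open>c > 0\<close> unfolding K_def[symmetric]
      by (simp add: divide_left_mono)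
  qed (use assms \<open>K > 0\<close> \<open>L \<ge> 1\<close> in \<open>auto simp: h_def\<close>)
qed

theorem proposition2p1:
  shows "(\<forall>\<alpha>::real. \<alpha> > 0 \<and> \<alpha> \<notin> \<rat> \<and> badly_approximable \<alpha> \<longrightarrow>
            (\<exists>C>0. \<forall>N::nat. N \<ge> 2 \<longrightarrow> delta_min \<alpha> N \<ge> C / real N))
       \<and> (\<forall>\<alpha>::real. \<alpha> > 0 \<and> \<alpha> \<notin> \<rat> \<and> strongly_diophantine \<alpha> \<longrightarrow>
            (\<forall>\<epsilon>>0. \<exists>C>0. \<forall>N::nat. N \<ge> 2 \<longrightarrow>
                delta_min \<alpha> N \<ge> C / real N powr (1 + \<epsilon>)))
       \<and> (AE \<alpha> in lborel. \<alpha> > 0 \<and> \<alpha> \<notin> \<rat> \<longrightarrow>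
            (\<forall>\<epsilon>>0. \<exists>C>0. \<forall>N::nat. N \<ge> 2 \<longrightarrow>
                delta_min \<alpha> N \<ge> C / (real N * ln (real N) powr (1 + \<epsilon>))))"
proof (intro conjI)
  show "AE \<alpha> in lborel. \<alpha> > 0 \<and> \<alpha> \<notin> \<rat> \<longrightarrow>
          (\<forall>\<epsilon>>0. \<exists>C>0. \<forall>N::nat. N \<ge> 2 \<longrightarrow>
              delta_min \<alpha> N \<ge> C / (real N * ln (real N) powr (1 + \<epsilon>)))"
    using AE_diophantine_log
  proof eventually_elim
    case (elim \<alpha>)
    show ?case
    proof (intro impI allI)
      fix \<epsilon> :: real assume \<alpha>: "\<alpha> > 0 \<and> \<alpha> \<notin> \<rat>" and "\<epsilon> > 0"
      with elim obtain c where "c > 0" and "\<forall>p q::int. q \<ge> 1 \<longrightarrow>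
          c / (real_of_int q * ln (real_of_int q + 2) powr (1 + \<epsilon>)) \<le> \<bar>real_of_int q * \<alpha> - of_int p\<bar>"
        by blast
      then show "\<exists>C>0. \<forall>N::nat. N \<ge> 2 \<longrightarrow> delta_min \<alpha> N \<ge> C / (real N * ln (real N) powr (1 + \<epsilon>))"
        using delta_min_log_diophantine[of \<alpha> \<epsilon> c] \<alpha> \<open>\<epsilon> > 0\<close> by simp
    qed
  qed
qed (blast intro: delta_min_badly_approximable delta_min_strongly_diophantine)+

end
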